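(* Let $(\mathcal{X},\mathcal{B}_{\mathcal{X}})$, $(\mathcal{Y},\mathcal{B}_{\mathcal{Y}})$, $(\Omega,\mathcal{F})$ be measurable spaces and $(\mu^\omega)_{\omega\in\Omega}$, $(\nu^\omega)_{\omega\in\Omega}$ regular families of measures on $\mathcal{X}$, $\mathcal{Y}$ respectively. For each $\omega$ let $\mathcal{A}^\omega:L^2(\mathcal{X},\mathcal{B}_{\mathcal{X}},\mu^\omega)\to L^2(\mathcal{Y},\mathcal{B}_{\mathcal{Y}},\nu^\omega)$ be a bounded linear operator. Assume: 1) there are measurable $f_n:\mathcal{X}\to\mathbb{R}$, $k_n:\mathcal{Y}\to\mathbb{R}$ ($n\ge1$) such that for every $\omega$, $(f_n)$ is total in $L^2(\mathcal{X},\mathcal{B}_{\mathcal{X}},\mu^\omega)$ and $(k_n)$ is total in $L^2(\mathcal{Y},\mathcal{B}_{\mathcal{Y}},\nu^\omega)$; 2) for each $n$, the family $\{\mathcal{A}^\omega f_n\}_{\omega\in\Omega}$ can be realized as a measurable function on $\mathcal{Y}\times\Omega$ w.r.t. $\{\nu^\omega\}$. Then for every measurable $g:\mathcal{X}\times\Omega\to\mathbb{R}$ with $g(\cdot,\omega)\in L^2(\mathcal{X},\mathcal{B}_{\mathcal{X}},\mu^\omega)$ for all $\omega$, the family $\{\mathcal{A}^\omega(g(\cdot,\omega))\}_{\omega\in\Omega}$ can be realized as a measurable function on $\mathcal{Y}\times\Omega$ w.r.t. $\{\nu^\omega\}$.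
   Context: A regular family of measures $(\mu^\omega)_{\omega\in\Omega}$ on $(\mathcal{X},\mathcal{B})$ is a map $(B,\omega)\mapsto\mu^\omega(B)\in[0,\infty]$ such that each $\mu^\omega$ is a (possibly infinite) measure and $\omega\mapsto\mu^\omega(B)$ is $\mathcal{F}$-measurable for every $B\in\mathcal{B}$. A family $\{\xi^\omega\}_{\omega\in\Omega}$ of measurable functions on $\mathcal{Y}$ "can be realized as a measurable function on $\mathcal{Y}\times\Omega$ w.r.t. $\{\nu^\omega\}$" if there is a measurable $h:\mathcal{Y}\times\Omega\to\mathbb{R}$ with $h(\cdot,\omega)=\xi^\omega$ $\nu^\omega$-a.e. for every $\omega$. *)

theory Defs
  imports "HOL-Analysis.Analysis"
begin

text \<open>Real square-integrable functions on a (possibly infinite) measure space.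
  L^2 is modelled on representatives; everything below respects a.e. equality.\<close>
definition L2 :: "'a measure \<Rightarrow> ('a \<Rightarrow> real) \<Rightarrow> bool" where
  "L2 M f \<longleftrightarrow> f \<in> borel_measurable M \<and> integrable M (\<lambda>x. (f x)\<^sup>2)"

definition L2norm :: "'a measure \<Rightarrow> ('a \<Rightarrow> real) \<Rightarrow> real" where
  "L2norm M f = sqrt (\<integral>x. (f x)\<^sup>2 \<partial>M)"

definition bounded_linear_L2 ::
  "'a measure \<Rightarrow> 'b measure \<Rightarrow> (('a \<Rightarrow> real) \<Rightarrow> ('b \<Rightarrow> real)) \<Rightarrow> bool" where
  "bounded_linear_L2 M N A \<longleftrightarrow>
     (\<forall>f. L2 M f \<longrightarrow> L2 N (A f)) \<and>
     (\<forall>f g. L2 M f \<longrightarrow> L2 M g \<longrightarrow> (AE x in M. f x = g x) \<longrightarrow> (AE y in N. A f y = A g y)) \<and>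
     (\<forall>f g a b. L2 M f \<longrightarrow> L2 M g \<longrightarrow>
        (AE y in N. A (\<lambda>x. a * f x + b * g x) y = a * A f y + b * A g y)) \<and>
     (\<exists>C. \<forall>f. L2 M f \<longrightarrow> L2norm N (A f) \<le> C * L2norm M f)"

definition total_L2 :: "'a measure \<Rightarrow> (nat \<Rightarrow> 'a \<Rightarrow> real) \<Rightarrow> bool" where
  "total_L2 M fs \<longleftrightarrow> (\<forall>n. L2 M (fs n)) \<and>
     (\<forall>g. L2 M g \<longrightarrow> (\<forall>\<epsilon>>0. \<exists>m c. L2norm M (\<lambda>x. g x - (\<Sum>i<m. c i * fs i x)) < \<epsilon>))"

definition regular_family :: "'w measure \<Rightarrow> 'a measure \<Rightarrow> ('w \<Rightarrow> 'a measure) \<Rightarrow> bool" where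
  "regular_family \<Omega> X \<mu> \<longleftrightarrow> (\<forall>\<omega>\<in>space \<Omega>. sets (\<mu> \<omega>) = sets X) \<and>
     (\<forall>B\<in>sets X. (\<lambda>\<omega>. emeasure (\<mu> \<omega>) B) \<in> borel_measurable \<Omega>)"

definition realizable :: "'w measure \<Rightarrow> 'b measure \<Rightarrow> ('w \<Rightarrow> 'b measure) \<Rightarrow> ('w \<Rightarrow> 'b \<Rightarrow> real) \<Rightarrow> bool" where
  "realizable \<Omega> Y \<nu> \<xi> \<longleftrightarrow> (\<exists>h \<in> borel_measurable (Y \<Otimes>\<^sub>M \<Omega>).
     \<forall>\<omega>\<in>space \<Omega>. AE y in \<nu> \<omega>. h (y, \<omega>) = \<xi> \<omega> y)"

end

theory Submission
  imports Defs "HOL-Probability.Probability"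
begin

text \<open>For each \<omega>, approximate g(-,\<omega>) in L2(\<mu> \<omega>) to within 2^-m by a combination of the f n with
  rational coefficients. There are only countably many coefficient lists, and the approximation
  error is a measurable function of \<omega>, so a good list can be selected measurably in \<omega>. The same
  combinations of measurable realizations of A \<omega> (f n) are then measurable on Y \<times> \<Omega>; as A \<omega> is
  bounded, their squared L2(\<nu> \<omega>) errors are summable, so they converge \<nu> \<omega>-a.e. to
  A \<omega> (g(-,\<omega>)), and their pointwise limit is the required realization.\<close>

section \<open>Square-integrable functions and bounded operators\<close>

lemma square_add_le: "(u + v)\<^sup>2 \<le> 2 * u\<^sup>2 + 2 * (v::real)\<^sup>2"
  by (smt (verit) power2_sum sum_squares_bound)

lemma L2_zero: "L2 M (\<lambda>x. 0)"
  unfolding L2_def by simp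

lemma L2_lincomb:
  assumes "L2 M f" "L2 M g"
  shows "L2 M (\<lambda>x. a * f x + b * g x)"
proof -
  have [measurable]: "f \<in> borel_measurable M" "g \<in> borel_measurable M"
    and "integrable M (\<lambda>x. (f x)\<^sup>2)" "integrable M (\<lambda>x. (g x)\<^sup>2)"
    using assms by (auto simp: L2_def)
  then have bound_integrable: "integrable M (\<lambda>x. 2 * a\<^sup>2 * (f x)\<^sup>2 + 2 * b\<^sup>2 * (g x)\<^sup>2)"
    by auto
  have bound: "norm ((a * f x + b * g x)\<^sup>2) \<le> norm (2 * a\<^sup>2 * (f x)\<^sup>2 + 2 * b\<^sup>2 * (g x)\<^sup>2)" for x
    using square_add_le[of "a * f x" "b * g x"] by (simp add: power_mult_distrib)
  have "integrable M (\<lambda>x. (a * f x + b * g x)\<^sup>2)"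
    by (rule Bochner_Integration.integrable_bound[OF bound_integrable]) (measurable, rule AE_I2, rule bound)
  then show ?thesis
    unfolding L2_def by simp
qed

lemma L2_sum:
  fixes n :: nat
  assumes "\<And>i. L2 M (fs i)"
  shows "L2 M (\<lambda>x. \<Sum>i<n. c i * fs i x)"
proof (induction n)
  case (Suc n)
  then show ?case
    using L2_lincomb[OF Suc assms, where a=1 and b="c n"] by simp
qed (simp add: L2_zero)

lemma L2_diff_sum:
  fixes n :: nat
  assumes "\<And>i. L2 M (fs i)" and "L2 M g"
  shows "L2 M (\<lambda>x. g x - (\<Sum>i<n. c i * fs i x))"
  using L2_lincomb[OF assms(2) L2_sum[OF assms(1), where n=n and c=c], of 1 "-1"] by simp

lemma nn_integral_square_L2:
  "L2 M h \<Longrightarrow> (\<integral>\<^sup>+x. ennreal ((h x)\<^sup>2) \<partial>M) = ennreal (\<integral>x. (h x)\<^sup>2 \<partial>M)"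
  unfolding L2_def by (intro nn_integral_eq_integral) auto

lemma integral_square_add_le:
  assumes "L2 M u" "L2 M v"
  shows "(\<integral>x. (u x + v x)\<^sup>2 \<partial>M) \<le> 2 * (\<integral>x. (u x)\<^sup>2 \<partial>M) + 2 * (\<integral>x. (v x)\<^sup>2 \<partial>M)"
proof -
  have "L2 M (\<lambda>x. 1 * u x + 1 * v x)"
    using assms by (rule L2_lincomb)
  then have "(\<integral>x. (u x + v x)\<^sup>2 \<partial>M) \<le> (\<integral>x. 2 * (u x)\<^sup>2 + 2 * (v x)\<^sup>2 \<partial>M)"
    using assms by (intro integral_mono square_add_le) (auto simp: L2_def)
  also have "\<dots> = 2 * (\<integral>x. (u x)\<^sup>2 \<partial>M) + 2 * (\<integral>x. (v x)\<^sup>2 \<partial>M)"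
    using assms unfolding L2_def by (subst Bochner_Integration.integral_add) auto
  finally show ?thesis .
qed

lemma integral_square_lt_of_L2norm_lt:
  "L2norm M h < e \<Longrightarrow> (\<integral>x. (h x)\<^sup>2 \<partial>M) < e\<^sup>2"
proof -
  assume "L2norm M h < e"
  then have "(sqrt (\<integral>x. (h x)\<^sup>2 \<partial>M))\<^sup>2 < e\<^sup>2"
    unfolding L2norm_def by (intro power_strict_mono) auto
  then show ?thesis by simp
qed

lemma bounded_linear_L2_L2: "bounded_linear_L2 M N A \<Longrightarrow> L2 M f \<Longrightarrow> L2 N (A f)"
  unfolding bounded_linear_L2_def by blast

lemma bounded_linear_L2_lincomb:
  "bounded_linear_L2 M N A \<Longrightarrow> L2 M f \<Longrightarrow> L2 M g \<Longrightarrow>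
    AE y in N. A (\<lambda>x. a * f x + b * g x) y = a * A f y + b * A g y"
  unfolding bounded_linear_L2_def by blast

lemma bounded_linear_L2_bounded:
  "bounded_linear_L2 M N A \<Longrightarrow> \<exists>C. \<forall>f. L2 M f \<longrightarrow> L2norm N (A f) \<le> C * L2norm M f"
  unfolding bounded_linear_L2_def by blast

lemma bounded_linear_L2_sum:
  fixes n :: nat
  assumes A: "bounded_linear_L2 M N A" and fs: "\<And>i. L2 M (fs i)"
  shows "AE y in N. A (\<lambda>x. \<Sum>i<n. c i * fs i x) y = (\<Sum>i<n. c i * A (fs i) y)"
proof (induction n)
  case 0
  have "AE y in N. A (\<lambda>x. 0 * 0 + 0 * 0) y = 0 * A (\<lambda>x. 0) y + 0 * A (\<lambda>x. 0) y"
    by (rule bounded_linear_L2_lincomb[OF A L2_zero L2_zero])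
  then show ?case by simp
next
  case (Suc n)
  have "AE y in N. A (\<lambda>x. 1 * (\<Sum>i<n. c i * fs i x) + c n * fs n x) y
     = 1 * A (\<lambda>x. \<Sum>i<n. c i * fs i x) y + c n * A (fs n) y"
    by (rule bounded_linear_L2_lincomb[OF A L2_sum[OF fs] fs])
  with Suc show ?case by (auto elim!: AE_mp)
qed

lemma bounded_linear_L2_diff_sum:
  fixes n :: nat
  assumes A: "bounded_linear_L2 M N A" and fs: "\<And>i. L2 M (fs i)" and g: "L2 M g"
  shows "AE y in N. A (\<lambda>x. g x - (\<Sum>i<n. c i * fs i x)) y = A g y - (\<Sum>i<n. c i * A (fs i) y)"
proof -
  have "AE y in N. A (\<lambda>x. 1 * g x + (-1) * (\<Sum>i<n. c i * fs i x)) y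
     = 1 * A g y + (-1) * A (\<lambda>x. \<Sum>i<n. c i * fs i x) y"
    by (rule bounded_linear_L2_lincomb[OF A g L2_sum[OF fs]])
  with bounded_linear_L2_sum[where fs=fs and n=n and c=c, OF A fs] show ?thesis
    by (auto elim!: AE_mp)
qed

lemma bounded_linear_L2_nn_integral_square_le:
  assumes A: "bounded_linear_L2 M N A" and h: "L2 M h"
    and C: "\<forall>f. L2 M f \<longrightarrow> L2norm N (A f) \<le> C * L2norm M f"
  shows "(\<integral>\<^sup>+y. ennreal ((A h y)\<^sup>2) \<partial>N) \<le> ennreal (C\<^sup>2) * (\<integral>\<^sup>+x. ennreal ((h x)\<^sup>2) \<partial>M)"
proof -
  have Ah: "L2 N (A h)"
    by (rule bounded_linear_L2_L2[OF A h])
  have "sqrt (\<integral>y. (A h y)\<^sup>2 \<partial>N) \<le> C * sqrt (\<integral>x. (h x)\<^sup>2 \<partial>M)"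
    using C h unfolding L2norm_def by blast
  then have "(sqrt (\<integral>y. (A h y)\<^sup>2 \<partial>N))\<^sup>2 \<le> (C * sqrt (\<integral>x. (h x)\<^sup>2 \<partial>M))\<^sup>2"
    by (intro power_mono) auto
  then have "(\<integral>y. (A h y)\<^sup>2 \<partial>N) \<le> C\<^sup>2 * (\<integral>x. (h x)\<^sup>2 \<partial>M)"
    by (simp add: power_mult_distrib)
  then have "ennreal (\<integral>y. (A h y)\<^sup>2 \<partial>N) \<le> ennreal (C\<^sup>2) * ennreal (\<integral>x. (h x)\<^sup>2 \<partial>M)"
    by (simp add: ennreal_mult[symmetric] ennreal_leI)
  then show ?thesis
    unfolding nn_integral_square_L2[OF Ah] nn_integral_square_L2[OF h] .
qed

section \<open>Approximation with rational coefficients\<close>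

lemma total_L2_approx:
  "total_L2 M fs \<Longrightarrow> L2 M g \<Longrightarrow> 0 < \<epsilon> \<Longrightarrow>
    \<exists>m c. L2norm M (\<lambda>x. g x - (\<Sum>i<m. c i * fs i x)) < \<epsilon>"
  unfolding total_L2_def by blast

definition rat_lincomb :: "rat list \<Rightarrow> (nat \<Rightarrow> 'a \<Rightarrow> real) \<Rightarrow> 'a \<Rightarrow> real" where
  "rat_lincomb qs fs x = (\<Sum>i<length qs. real_of_rat (qs ! i) * fs i x)"

lemma rat_lincomb_map_upt:
  "rat_lincomb (map q [0..<m]) fs x = (\<Sum>i<m. real_of_rat (q i) * fs i x)"
  unfolding rat_lincomb_def by (intro sum.cong) auto

lemma exists_rat_near:
  assumes "0 < e"
  shows "\<exists>r. \<bar>x - real_of_rat r\<bar> < e"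
proof -
  obtain s where "s \<in> \<rat>" "x - e < s" "s < x + e"
    using Rats_dense_in_real[of "x - e" "x + e"] assms by auto
  then show ?thesis
    by (metis Rats_cases abs_diff_less_iff diff_less_eq)
qed

lemma L2_rational_coefficients_approx:
  fixes m :: nat and c :: "nat \<Rightarrow> real"
  assumes fs: "\<And>i. L2 M (fs i)" and "0 < \<delta>"
  shows "\<exists>q. (\<integral>x. (\<Sum>i<m. (c i - real_of_rat (q i)) * fs i x)\<^sup>2 \<partial>M) < \<delta>"
  using \<open>0 < \<delta>\<close>
proof (induction m arbitrary: \<delta>)
  case (Suc m)
  define S where "S q x = (\<Sum>i<m. (c i - real_of_rat (q i)) * fs i x)" for q x
  obtain q where q: "(\<integral>x. (S q x)\<^sup>2 \<partial>M) < \<delta> / 4"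
    using Suc.IH[of "\<delta> / 4"] Suc.prems unfolding S_def by auto
  define K where "K = (\<integral>x. (fs m x)\<^sup>2 \<partial>M)"
  have "0 \<le> K"
    unfolding K_def by simp
  then obtain r where r: "\<bar>c m - real_of_rat r\<bar> < sqrt (\<delta> / (4 * (K + 1)))"
    using exists_rat_near[of "sqrt (\<delta> / (4 * (K + 1)))"] Suc.prems by auto
  define d where "d = c m - real_of_rat r"
  have "d\<^sup>2 < \<delta> / (4 * (K + 1))"
    using r unfolding d_def by (metis abs_ge_zero power2_abs real_sqrt_abs real_sqrt_less_iff)
  then have "d\<^sup>2 * K \<le> \<delta> / (4 * (K + 1)) * (K + 1)"
    using \<open>0 \<le> K\<close> Suc.prems by (intro mult_mono) auto
  also have "\<dots> = \<delta> / 4"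
    using \<open>0 \<le> K\<close> by (simp add: field_simps add_nonneg_pos)
  finally have dK: "d\<^sup>2 * K \<le> \<delta> / 4" .
  have split: "(\<Sum>i<Suc m. (c i - real_of_rat ((q(m := r)) i)) * fs i x) = S q x + d * fs m x" for x
    unfolding S_def d_def sum.lessThan_Suc by (auto intro!: sum.cong)
  have "L2 M (S q)"
    unfolding S_def by (rule L2_sum[OF fs])
  moreover have "L2 M (\<lambda>x. d * fs m x + 0 * fs m x)"
    by (rule L2_lincomb[OF fs fs])
  ultimately have "(\<integral>x. (S q x + d * fs m x)\<^sup>2 \<partial>M)
      \<le> 2 * (\<integral>x. (S q x)\<^sup>2 \<partial>M) + 2 * (\<integral>x. (d * fs m x)\<^sup>2 \<partial>M)"
    using integral_square_add_le[of M "S q" "\<lambda>x. d * fs m x"] by simp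
  also have "(\<integral>x. (d * fs m x)\<^sup>2 \<partial>M) = d\<^sup>2 * K"
    unfolding K_def by (simp add: power_mult_distrib)
  finally have "(\<integral>x. (S q x + d * fs m x)\<^sup>2 \<partial>M) < \<delta>"
    using q dK by linarith
  then show ?case
    unfolding split[symmetric] by blast
qed simp

lemma total_L2_rat_lincomb_approx:
  assumes tot: "total_L2 M fs" and g: "L2 M g" and "0 < \<delta>"
  shows "\<exists>qs. (\<integral>\<^sup>+x. ennreal ((g x - rat_lincomb qs fs x)\<^sup>2) \<partial>M) < ennreal \<delta>"
proof -
  have fs: "\<And>i. L2 M (fs i)"
    using tot by (simp add: total_L2_def)
  obtain m c where "L2norm M (\<lambda>x. g x - (\<Sum>i<m. c i * fs i x)) < sqrt (\<delta> / 4)"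
    using total_L2_approx[OF tot g, of "sqrt (\<delta> / 4)"] \<open>0 < \<delta>\<close> by auto
  then have D: "(\<integral>x. (g x - (\<Sum>i<m. c i * fs i x))\<^sup>2 \<partial>M) < \<delta> / 4"
    using integral_square_lt_of_L2norm_lt \<open>0 < \<delta>\<close> by fastforce
  obtain q where E: "(\<integral>x. (\<Sum>i<m. (c i - real_of_rat (q i)) * fs i x)\<^sup>2 \<partial>M) < \<delta> / 4"
    using L2_rational_coefficients_approx[where fs=fs and \<delta>="\<delta> / 4" and m=m and c=c, OF fs] \<open>0 < \<delta>\<close> by auto
  have split: "g x - rat_lincomb (map q [0..<m]) fs x
      = (g x - (\<Sum>i<m. c i * fs i x)) + (\<Sum>i<m. (c i - real_of_rat (q i)) * fs i x)" for x
    by (simp add: rat_lincomb_map_upt left_diff_distrib sum_subtractf)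
  have "(\<integral>x. (g x - rat_lincomb (map q [0..<m]) fs x)\<^sup>2 \<partial>M) < \<delta>"
    unfolding split using integral_square_add_le[OF L2_diff_sum[where fs=fs and n=m and c=c, OF fs g]
        L2_sum[where fs=fs and n=m and c="\<lambda>i. c i - real_of_rat (q i)", OF fs]] D E
    by linarith
  moreover have "L2 M (\<lambda>x. g x - rat_lincomb (map q [0..<m]) fs x)"
    unfolding rat_lincomb_map_upt by (rule L2_diff_sum[OF fs g])
  ultimately show ?thesis
    using \<open>0 < \<delta>\<close> by (intro exI[of _ "map q [0..<m]"]) (simp add: nn_integral_square_L2 ennreal_lessI)
qed

section \<open>Integrals against a regular family\<close>

lemma regular_family_sets: "regular_family \<Omega> X \<mu> \<Longrightarrow> \<omega> \<in> space \<Omega> \<Longrightarrow> sets (\<mu> \<omega>) = sets X"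
  unfolding regular_family_def by blast

lemma regular_family_emeasure_measurable:
  "regular_family \<Omega> X \<mu> \<Longrightarrow> B \<in> sets X \<Longrightarrow> (\<lambda>\<omega>. emeasure (\<mu> \<omega>) B) \<in> borel_measurable \<Omega>"
  unfolding regular_family_def by blast

lemma regular_family_measurable_cong:
  assumes "regular_family \<Omega> X \<mu>" "\<omega> \<in> space \<Omega>"
  shows "measurable (\<mu> \<omega>) N = measurable X N"
  using measurable_cong_sets[OF regular_family_sets[OF assms] refl] .

lemma nn_integral_eq_SUP_indicator:
  fixes T :: "nat \<Rightarrow> 'a set"
  assumes inc: "incseq T" and T: "\<And>N. T N \<in> sets M" and f[measurable]: "f \<in> borel_measurable M"
    and vanish: "AE x in M. x \<notin> (\<Union>N. T N) \<longrightarrow> f x = 0"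
  shows "(\<integral>\<^sup>+x. f x \<partial>M) = (SUP N. \<integral>\<^sup>+x. f x * indicator (T N) x \<partial>M)"
proof -
  have "AE x in M. f x = (SUP N. f x * indicator (T N) x)"
    using vanish
  proof eventually_elim
    case (elim x)
    show ?case
    proof (cases "x \<in> (\<Union>N. T N)")
      case True
      then obtain N0 where "x \<in> T N0" by auto
      then have "f x \<le> (SUP N. f x * indicator (T N) x)"
        by (intro SUP_upper2[of N0]) auto
      moreover have "(SUP N. f x * indicator (T N) x) \<le> f x"
        by (intro SUP_least) (auto simp: indicator_def)
      ultimately show ?thesis by (rule antisym)
    qed (use elim in simp)
  qed
  then have "(\<integral>\<^sup>+x. f x \<partial>M) = \<integral>\<^sup>+x. (SUP N. f x * indicator (T N) x) \<partial>M"
    by (rule nn_integral_cong_AE)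
  also have "\<dots> = (SUP N. \<integral>\<^sup>+x. f x * indicator (T N) x \<partial>M)"
  proof (rule nn_integral_monotone_convergence_SUP)
    show "incseq (\<lambda>N x. f x * indicator (T N) x)"
      using inc by (auto simp: incseq_def le_fun_def indicator_def intro!: mult_left_mono)
    show "(\<lambda>x. f x * indicator (T N) x) \<in> borel_measurable M" for N
      using T[of N] by measurable
  qed
  finally show ?thesis .
qed

definition normalized_restriction :: "'a measure \<Rightarrow> 'a set \<Rightarrow> 'a measure" where
  "normalized_restriction M T = density M (\<lambda>x. indicator T x / (1 + emeasure M T))"

lemma sets_normalized_restriction [simp]: "sets (normalized_restriction M T) = sets M"
  unfolding normalized_restriction_def by simp

lemma emeasure_normalized_restriction:
  assumes T: "T \<in> sets M" and B: "B \<in> sets M"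
  shows "emeasure (normalized_restriction M T) B = emeasure M (B \<inter> T) / (1 + emeasure M T)"
proof -
  have "emeasure (normalized_restriction M T) B
      = \<integral>\<^sup>+x. indicator T x / (1 + emeasure M T) * indicator B x \<partial>M"
    unfolding normalized_restriction_def using T B by (intro emeasure_density) auto
  also have "\<dots> = \<integral>\<^sup>+x. indicator (B \<inter> T) x * (1 / (1 + emeasure M T)) \<partial>M"
    by (intro nn_integral_cong) (auto simp: indicator_def ennreal_divide_times)
  also have "\<dots> = emeasure M (B \<inter> T) * (1 / (1 + emeasure M T))"
    using T B by (simp add: nn_integral_multc)
  finally show ?thesis
    by (simp add: ennreal_times_divide)
qed

lemma subprob_space_normalized_restriction:
  assumes T: "T \<in> sets M" and "space M \<noteq> {}"
  shows "subprob_space (normalized_restriction M T)"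
proof (rule subprob_spaceI)
  have "emeasure (normalized_restriction M T) (space M) = emeasure M T / (1 + emeasure M T)"
    using emeasure_normalized_restriction[OF T sets.top] sets.sets_into_space[OF T]
    by (simp add: Int_absorb1)
  also have "\<dots> \<le> 1"
    by (rule divide_le_posI_ennreal) (auto intro: add_pos_nonneg)
  finally show "emeasure (normalized_restriction M T) (space (normalized_restriction M T)) \<le> 1"
    by (simp add: sets_eq_imp_space_eq[OF sets_normalized_restriction])
  show "space (normalized_restriction M T) \<noteq> {}"
    using \<open>space M \<noteq> {}\<close> by (simp add: sets_eq_imp_space_eq[OF sets_normalized_restriction])
qed

lemma nn_integral_indicator_eq_normalized_restriction:
  assumes T: "T \<in> sets M" and fin: "emeasure M T < \<infinity>" and f: "f \<in> borel_measurable M"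
  shows "(\<integral>\<^sup>+x. f x * indicator T x \<partial>M)
      = (1 + emeasure M T) * (\<integral>\<^sup>+x. f x \<partial>normalized_restriction M T)"
proof -
  let ?c = "1 + emeasure M T"
  have c: "?c \<noteq> 0" "?c \<noteq> \<infinity>"
    using fin by auto
  have "?c * (\<integral>\<^sup>+x. f x \<partial>normalized_restriction M T) = ?c * \<integral>\<^sup>+x. indicator T x / ?c * f x \<partial>M"
    unfolding normalized_restriction_def using T f by (subst nn_integral_density) auto
  also have "\<dots> = \<integral>\<^sup>+x. ?c * (indicator T x / ?c * f x) \<partial>M"
    using T f by (subst nn_integral_cmult) auto
  also have "\<dots> = \<integral>\<^sup>+x. f x * indicator T x \<partial>M"
    using c by (intro nn_integral_cong)
      (auto simp: indicator_def ennreal_divide_self ennreal_times_divide mult.assoc[symmetric] top.not_eq_extremum)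
  finally show ?thesis ..
qed

lemma regular_family_normalized_restriction_measurable:
  assumes rf: "regular_family \<Omega> X \<mu>" and T[measurable]: "T \<in> sets X" and "space X \<noteq> {}"
  shows "(\<lambda>\<omega>. normalized_restriction (\<mu> \<omega>) T) \<in> measurable \<Omega> (subprob_algebra X)"
proof (rule measurable_subprob_algebra)
  fix \<omega> assume \<omega>: "\<omega> \<in> space \<Omega>"
  show "sets (normalized_restriction (\<mu> \<omega>) T) = sets X"
    using regular_family_sets[OF rf \<omega>] by simp
  show "subprob_space (normalized_restriction (\<mu> \<omega>) T)"
    using regular_family_sets[OF rf \<omega>] sets_eq_imp_space_eq[OF regular_family_sets[OF rf \<omega>]] \<open>space X \<noteq> {}\<close>
    by (intro subprob_space_normalized_restriction) auto
next
  fix B assume B[measurable]: "B \<in> sets X"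
  have [measurable]: "(\<lambda>\<omega>. emeasure (\<mu> \<omega>) (B \<inter> T)) \<in> borel_measurable \<Omega>"
    "(\<lambda>\<omega>. emeasure (\<mu> \<omega>) T) \<in> borel_measurable \<Omega>"
    by (auto intro!: regular_family_emeasure_measurable[OF rf])
  have "(\<lambda>\<omega>. emeasure (\<mu> \<omega>) (B \<inter> T) / (1 + emeasure (\<mu> \<omega>) T)) \<in> borel_measurable \<Omega>"
    by measurable
  then show "(\<lambda>\<omega>. emeasure (normalized_restriction (\<mu> \<omega>) T) B) \<in> borel_measurable \<Omega>"
    by (rule measurable_cong[THEN iffD1, rotated])
      (simp add: emeasure_normalized_restriction regular_family_sets[OF rf])
qed

lemma regular_family_nn_integral_indicator_measurable:
  fixes \<phi> :: "'x \<Rightarrow> 'w \<Rightarrow> ennreal"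
  assumes rf: "regular_family \<Omega> X \<mu>" and T[measurable]: "T \<in> sets X"
    and fin: "\<And>\<omega>. \<omega> \<in> space \<Omega> \<Longrightarrow> emeasure (\<mu> \<omega>) T < \<infinity>"
    and \<phi>[measurable]: "(\<lambda>(x, \<omega>). \<phi> x \<omega>) \<in> borel_measurable (X \<Otimes>\<^sub>M \<Omega>)"
  shows "(\<lambda>\<omega>. \<integral>\<^sup>+x. \<phi> x \<omega> * indicator T x \<partial>\<mu> \<omega>) \<in> borel_measurable \<Omega>"
proof (cases "space X = {}")
  case True
  then have "space (\<mu> \<omega>) = {}" if "\<omega> \<in> space \<Omega>" for \<omega>
    using sets_eq_imp_space_eq[OF regular_family_sets[OF rf that]] by simp
  then show ?thesis
    by (simp add: nn_integral_empty cong: measurable_cong)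
next
  case False
  have [measurable]: "(\<lambda>\<omega>. emeasure (\<mu> \<omega>) T) \<in> borel_measurable \<Omega>"
    by (rule regular_family_emeasure_measurable[OF rf T])
  have [measurable]: "(\<lambda>\<omega>. normalized_restriction (\<mu> \<omega>) T) \<in> measurable \<Omega> (subprob_algebra X)"
    by (rule regular_family_normalized_restriction_measurable[OF rf T False])
  have "(\<lambda>(\<omega>, x). \<phi> x \<omega>) \<in> borel_measurable (\<Omega> \<Otimes>\<^sub>M X)"
    by measurable
  then have "(\<lambda>\<omega>. \<integral>\<^sup>+x. \<phi> x \<omega> \<partial>normalized_restriction (\<mu> \<omega>) T) \<in> borel_measurable \<Omega>"
    by (rule nn_integral_measurable_subprob_algebra2) measurable
  then have "(\<lambda>\<omega>. (1 + emeasure (\<mu> \<omega>) T) * \<integral>\<^sup>+x. \<phi> x \<omega> \<partial>normalized_restriction (\<mu> \<omega>) T)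
      \<in> borel_measurable \<Omega>"
    by measurable
  then show ?thesis
  proof (rule measurable_cong[THEN iffD1, rotated])
    fix \<omega> assume \<omega>: "\<omega> \<in> space \<Omega>"
    have "(\<lambda>x. \<phi> x \<omega>) \<in> borel_measurable (\<mu> \<omega>)"
      unfolding regular_family_measurable_cong[OF rf \<omega>] using \<omega> by measurable
    with \<omega> show "(1 + emeasure (\<mu> \<omega>) T) * (\<integral>\<^sup>+x. \<phi> x \<omega> \<partial>normalized_restriction (\<mu> \<omega>) T)
        = \<integral>\<^sup>+x. \<phi> x \<omega> * indicator T x \<partial>\<mu> \<omega>"
      using regular_family_sets[OF rf \<omega>] fin
      by (simp add: nn_integral_indicator_eq_normalized_restriction)
  qed
qed

definition support_exhaustion :: "'a set \<Rightarrow> (nat \<Rightarrow> 'a \<Rightarrow> real) \<Rightarrow> nat \<Rightarrow> 'a set" where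
  "support_exhaustion S fs N = {x \<in> S. \<exists>n<N. 1 \<le> real (Suc N) * (fs n x)\<^sup>2}"

lemma support_exhaustion_sets [measurable]:
  "(\<And>n. fs n \<in> borel_measurable M) \<Longrightarrow> support_exhaustion (space M) fs N \<in> sets M"
  unfolding support_exhaustion_def by measurable

lemma incseq_support_exhaustion: "incseq (support_exhaustion S fs)"
proof (rule incseq_SucI, rule subsetI)
  fix N x assume "x \<in> support_exhaustion S fs N"
  then obtain n where "x \<in> S" "n < N" "1 \<le> real (Suc N) * (fs n x)\<^sup>2"
    by (auto simp: support_exhaustion_def)
  moreover have "real (Suc N) * (fs n x)\<^sup>2 \<le> real (Suc (Suc N)) * (fs n x)\<^sup>2"
    by (intro mult_right_mono) auto
  ultimately show "x \<in> support_exhaustion S fs (Suc N)"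
    unfolding support_exhaustion_def by (auto intro!: exI[of _ n])
qed

lemma support_exhaustion_exhausts:
  assumes "x \<in> S" and "x \<notin> (\<Union>N. support_exhaustion S fs N)"
  shows "fs n x = 0"
proof (rule ccontr)
  assume "fs n x \<noteq> 0"
  then have pos: "0 < (fs n x)\<^sup>2"
    by simp
  obtain N0 :: nat where "1 / (fs n x)\<^sup>2 \<le> real N0"
    using real_arch_simple by blast
  then have "1 / (fs n x)\<^sup>2 \<le> real (Suc (max N0 (Suc n)))"
    by linarith
  then have "1 \<le> real (Suc (max N0 (Suc n))) * (fs n x)\<^sup>2"
    using pos by (simp add: divide_le_eq del: of_nat_Suc)
  then have "x \<in> support_exhaustion S fs (max N0 (Suc n))"
    using \<open>x \<in> S\<close> unfolding support_exhaustion_def by (auto intro!: exI[of _ n])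
  with assms(2) show False
    by blast
qed

lemma emeasure_support_exhaustion_finite:
  assumes fs: "\<And>n. L2 M (fs n)"
  shows "emeasure M (support_exhaustion (space M) fs N) < \<infinity>"
proof -
  have [measurable]: "\<And>n. fs n \<in> borel_measurable M"
    using fs by (simp add: L2_def)
  have int: "integrable M (\<lambda>x. real (Suc N) * (\<Sum>n<N. (fs n x)\<^sup>2))"
    using fs by (auto simp: L2_def)
  have "emeasure M (support_exhaustion (space M) fs N)
      = \<integral>\<^sup>+x. indicator (support_exhaustion (space M) fs N) x \<partial>M"
    by simp
  also have "\<dots> \<le> \<integral>\<^sup>+x. ennreal (real (Suc N) * (\<Sum>n<N. (fs n x)\<^sup>2)) \<partial>M"
  proof (intro nn_integral_mono)
    fix x
    show "indicator (support_exhaustion (space M) fs N) x \<le> ennreal (real (Suc N) * (\<Sum>n<N. (fs n x)\<^sup>2))"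
    proof (cases "x \<in> support_exhaustion (space M) fs N")
      case True
      then obtain n where n: "n < N" "1 \<le> real (Suc N) * (fs n x)\<^sup>2"
        by (auto simp: support_exhaustion_def)
      have "(fs n x)\<^sup>2 \<le> (\<Sum>n<N. (fs n x)\<^sup>2)"
        using n(1) by (intro member_le_sum) auto
      then have "real (Suc N) * (fs n x)\<^sup>2 \<le> real (Suc N) * (\<Sum>n<N. (fs n x)\<^sup>2)"
        by (intro mult_left_mono) auto
      with n(2) have "1 \<le> real (Suc N) * (\<Sum>n<N. (fs n x)\<^sup>2)"
        by linarith
      with True show ?thesis
        by (simp add: indicator_def del: of_nat_Suc)
    qed (simp add: indicator_def)
  qed
  also have "\<dots> < \<infinity>"
    using int by (simp add: nn_integral_eq_integral sum_nonneg)
  finally show ?thesis .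
qed

lemma total_L2_AE_vanish:
  assumes tot: "total_L2 M fs" and g: "L2 M g"
  shows "AE x in M. (\<forall>n. fs n x = 0) \<longrightarrow> g x = 0"
proof -
  define Z where "Z = {x\<in>space M. \<forall>n. fs n x = 0}"
  have fs: "\<And>i. L2 M (fs i)"
    using tot by (simp add: total_L2_def)
  then have [measurable]: "\<And>i. fs i \<in> borel_measurable M"
    by (simp add: L2_def)
  have [measurable]: "g \<in> borel_measurable M"
    using g by (simp add: L2_def)
  have Z[measurable]: "Z \<in> sets M"
    unfolding Z_def by measurable
  have "(\<integral>\<^sup>+x. ennreal ((g x)\<^sup>2) * indicator Z x \<partial>M) \<le> 0"
  proof (rule ennreal_le_epsilon)
    fix e :: real assume "0 < e"
    obtain m c where "L2norm M (\<lambda>x. g x - (\<Sum>i<m. c i * fs i x)) < sqrt e"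
      using total_L2_approx[OF tot g, of "sqrt e"] \<open>0 < e\<close> by auto
    then have approx: "(\<integral>x. (g x - (\<Sum>i<m. c i * fs i x))\<^sup>2 \<partial>M) < e"
      using \<open>0 < e\<close> by (auto dest: integral_square_lt_of_L2norm_lt)
    have "(\<integral>\<^sup>+x. ennreal ((g x)\<^sup>2) * indicator Z x \<partial>M)
        \<le> (\<integral>\<^sup>+x. ennreal ((g x - (\<Sum>i<m. c i * fs i x))\<^sup>2) \<partial>M)"
      by (intro nn_integral_mono) (auto simp: indicator_def Z_def)
    also have "\<dots> = ennreal (\<integral>x. (g x - (\<Sum>i<m. c i * fs i x))\<^sup>2 \<partial>M)"
      by (rule nn_integral_square_L2[OF L2_diff_sum[where fs=fs, OF fs g]])
    also have "\<dots> \<le> ennreal e"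
      using approx by (intro ennreal_leI) simp
    finally show "(\<integral>\<^sup>+x. ennreal ((g x)\<^sup>2) * indicator Z x \<partial>M) \<le> 0 + ennreal e"
      by simp
  qed
  then have "(\<integral>\<^sup>+x. ennreal ((g x)\<^sup>2) * indicator Z x \<partial>M) = 0"
    by simp
  then have "AE x in M. ennreal ((g x)\<^sup>2) * indicator Z x = 0"
    by (subst (asm) nn_integral_0_iff_AE) auto
  then show ?thesis
    using AE_space
  proof eventually_elim
    case (elim x)
    then show ?case
      unfolding Z_def by (auto simp: indicator_def split: if_splits)
  qed
qed

text \<open>The \<mu> \<omega> need not be finite, so the integral is exhausted by integrals over the sets
  support_exhaustion, which have finite measure and off which \<phi> vanishes; on each of them the
  normalized restriction reduces measurability to the Giry monad.\<close>

lemma regular_family_nn_integral_measurable: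
  fixes \<phi> :: "'x \<Rightarrow> 'w \<Rightarrow> ennreal" and fs :: "nat \<Rightarrow> 'x \<Rightarrow> real"
  assumes rf: "regular_family \<Omega> X \<mu>"
    and fs[measurable]: "\<And>n. fs n \<in> borel_measurable X"
    and fs_L2: "\<And>\<omega> n. \<omega> \<in> space \<Omega> \<Longrightarrow> L2 (\<mu> \<omega>) (fs n)"
    and \<phi>[measurable]: "(\<lambda>(x, \<omega>). \<phi> x \<omega>) \<in> borel_measurable (X \<Otimes>\<^sub>M \<Omega>)"
    and vanish: "\<And>\<omega>. \<omega> \<in> space \<Omega> \<Longrightarrow> AE x in \<mu> \<omega>. (\<forall>n. fs n x = 0) \<longrightarrow> \<phi> x \<omega> = 0"
  shows "(\<lambda>\<omega>. \<integral>\<^sup>+x. \<phi> x \<omega> \<partial>\<mu> \<omega>) \<in> borel_measurable \<Omega>"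
proof -
  let ?T = "support_exhaustion (space X) fs"
  have space_\<mu>: "space (\<mu> \<omega>) = space X" if "\<omega> \<in> space \<Omega>" for \<omega>
    using sets_eq_imp_space_eq[OF regular_family_sets[OF rf that]] .
  have fin: "emeasure (\<mu> \<omega>) (?T N) < \<infinity>" if "\<omega> \<in> space \<Omega>" for \<omega> N
    using emeasure_support_exhaustion_finite[OF fs_L2[OF that]] space_\<mu>[OF that] by simp
  have T: "?T N \<in> sets X" for N
    by measurable
  have "(\<lambda>\<omega>. \<integral>\<^sup>+x. \<phi> x \<omega> * indicator (?T N) x \<partial>\<mu> \<omega>) \<in> borel_measurable \<Omega>" for N
    by (rule regular_family_nn_integral_indicator_measurable[OF rf T fin \<phi>])
  then have "(\<lambda>\<omega>. SUP N. \<integral>\<^sup>+x. \<phi> x \<omega> * indicator (?T N) x \<partial>\<mu> \<omega>) \<in> borel_measurable \<Omega>"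
    by (intro borel_measurable_SUP) auto
  then show ?thesis
  proof (rule measurable_cong[THEN iffD1, rotated])
    fix \<omega> assume \<omega>: "\<omega> \<in> space \<Omega>"
    have "?T N \<in> sets (\<mu> \<omega>)" for N
      using T regular_family_sets[OF rf \<omega>] by simp
    moreover have "(\<lambda>x. \<phi> x \<omega>) \<in> borel_measurable (\<mu> \<omega>)"
      unfolding regular_family_measurable_cong[OF rf \<omega>] using \<omega> by measurable
    moreover have "AE x in \<mu> \<omega>. x \<notin> (\<Union>N. ?T N) \<longrightarrow> \<phi> x \<omega> = 0"
      using vanish[OF \<omega>] AE_space
    proof eventually_elim
      case (elim x)
      then have "x \<in> space X"
        using space_\<mu>[OF \<omega>] by simp
      with elim(1) show ?case
        using support_exhaustion_exhausts[of x "space X" fs] by blast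
    qed
    ultimately show "(SUP N. \<integral>\<^sup>+x. \<phi> x \<omega> * indicator (?T N) x \<partial>\<mu> \<omega>) = \<integral>\<^sup>+x. \<phi> x \<omega> \<partial>\<mu> \<omega>"
      by (rule nn_integral_eq_SUP_indicator[OF incseq_support_exhaustion, symmetric])
  qed
qed

lemma measurable_select_countable:
  fixes P :: "'w \<Rightarrow> 'c::countable \<Rightarrow> bool"
  assumes P: "\<And>c. Measurable.pred \<Omega> (\<lambda>\<omega>. P \<omega> c)"
    and ex: "\<And>\<omega>. \<omega> \<in> space \<Omega> \<Longrightarrow> \<exists>c. P \<omega> c"
  shows "\<exists>s \<in> measurable \<Omega> (count_space UNIV). \<forall>\<omega>\<in>space \<Omega>. P \<omega> (s \<omega>)"
proof -
  define j where "j \<omega> = (LEAST j. P \<omega> (from_nat j))" for \<omega>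
  have "j \<in> measurable \<Omega> (count_space UNIV)"
    unfolding j_def by (rule measurable_Least) (rule P)
  then have "from_nat \<circ> j \<in> measurable \<Omega> (count_space UNIV)"
    by (rule measurable_comp) simp
  moreover have "P \<omega> (from_nat (j \<omega>))" if \<omega>: "\<omega> \<in> space \<Omega>" for \<omega>
  proof -
    obtain c where "P \<omega> c"
      using ex[OF \<omega>] by blast
    then have "P \<omega> (from_nat (to_nat c))"
      by simp
    then show ?thesis
      unfolding j_def by (rule LeastI)
  qed
  ultimately show ?thesis
    by (intro bexI[of _ "from_nat \<circ> j"]) auto
qed

section \<open>Realizations\<close>

lemma regular_family_rat_lincomb_select:
  fixes f :: "nat \<Rightarrow> 'x \<Rightarrow> real" and g :: "'x \<times> 'w \<Rightarrow> real"
  assumes rf: "regular_family \<Omega> X \<mu>" and f[measurable]: "\<And>n. f n \<in> borel_measurable X"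
    and tot: "\<And>\<omega>. \<omega> \<in> space \<Omega> \<Longrightarrow> total_L2 (\<mu> \<omega>) f"
    and g[measurable]: "g \<in> borel_measurable (X \<Otimes>\<^sub>M \<Omega>)"
    and g_L2: "\<And>\<omega>. \<omega> \<in> space \<Omega> \<Longrightarrow> L2 (\<mu> \<omega>) (\<lambda>x. g (x, \<omega>))"
    and "0 < \<delta>"
  shows "\<exists>s \<in> measurable \<Omega> (count_space UNIV). \<forall>\<omega>\<in>space \<Omega>.
           (\<integral>\<^sup>+x. ennreal ((g (x, \<omega>) - rat_lincomb (s \<omega>) f x)\<^sup>2) \<partial>\<mu> \<omega>) < ennreal \<delta>"
proof (rule measurable_select_countable)
  fix qs :: "rat list"
  have "(\<lambda>\<omega>. \<integral>\<^sup>+x. ennreal ((g (x, \<omega>) - rat_lincomb qs f x)\<^sup>2) \<partial>\<mu> \<omega>) \<in> borel_measurable \<Omega>"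
  proof (rule regular_family_nn_integral_measurable[OF rf f])
    show "L2 (\<mu> \<omega>) (f n)" if "\<omega> \<in> space \<Omega>" for \<omega> n
      using tot[OF that] by (simp add: total_L2_def)
    show "(\<lambda>(x, \<omega>). ennreal ((g (x, \<omega>) - rat_lincomb qs f x)\<^sup>2)) \<in> borel_measurable (X \<Otimes>\<^sub>M \<Omega>)"
      unfolding rat_lincomb_def by measurable
    show "AE x in \<mu> \<omega>. (\<forall>n. f n x = 0) \<longrightarrow> ennreal ((g (x, \<omega>) - rat_lincomb qs f x)\<^sup>2) = 0"
      if "\<omega> \<in> space \<Omega>" for \<omega>
      using total_L2_AE_vanish[OF tot[OF that] g_L2[OF that]]
      by eventually_elim (simp add: rat_lincomb_def)
  qed
  then show "Measurable.pred \<Omega> (\<lambda>\<omega>. (\<integral>\<^sup>+x. ennreal ((g (x, \<omega>) - rat_lincomb qs f x)\<^sup>2) \<partial>\<mu> \<omega>) < ennreal \<delta>)"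
    by measurable
next
  fix \<omega> assume "\<omega> \<in> space \<Omega>"
  then show "\<exists>qs. (\<integral>\<^sup>+x. ennreal ((g (x, \<omega>) - rat_lincomb qs f x)\<^sup>2) \<partial>\<mu> \<omega>) < ennreal \<delta>"
    using total_L2_rat_lincomb_approx[OF tot g_L2 \<open>0 < \<delta>\<close>] by blast
qed

lemma regular_family_rat_lincomb_select_seq:
  fixes f :: "nat \<Rightarrow> 'x \<Rightarrow> real" and g :: "'x \<times> 'w \<Rightarrow> real"
  assumes "regular_family \<Omega> X \<mu>" and "\<And>n. f n \<in> borel_measurable X"
    and "\<And>\<omega>. \<omega> \<in> space \<Omega> \<Longrightarrow> total_L2 (\<mu> \<omega>) f"
    and "g \<in> borel_measurable (X \<Otimes>\<^sub>M \<Omega>)"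
    and "\<And>\<omega>. \<omega> \<in> space \<Omega> \<Longrightarrow> L2 (\<mu> \<omega>) (\<lambda>x. g (x, \<omega>))"
    and "\<And>m. 0 < \<delta> m"
  shows "\<exists>s. \<forall>m. s m \<in> measurable \<Omega> (count_space UNIV) \<and> (\<forall>\<omega>\<in>space \<Omega>.
           (\<integral>\<^sup>+x. ennreal ((g (x, \<omega>) - rat_lincomb (s m \<omega>) f x)\<^sup>2) \<partial>\<mu> \<omega>) < ennreal (\<delta> m))"
proof (rule choice, rule allI)
  fix m
  show "\<exists>s. s \<in> measurable \<Omega> (count_space UNIV) \<and> (\<forall>\<omega>\<in>space \<Omega>.
      (\<integral>\<^sup>+x. ennreal ((g (x, \<omega>) - rat_lincomb (s \<omega>) f x)\<^sup>2) \<partial>\<mu> \<omega>) < ennreal (\<delta> m))"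
    using regular_family_rat_lincomb_select[OF assms(1-5), of "\<delta> m"] assms(6) by auto
qed

lemma measurable_rat_lincomb_select:
  assumes "\<And>i. hs i \<in> borel_measurable M" and "s \<in> measurable M (count_space UNIV)"
  shows "(\<lambda>p. rat_lincomb (s p) hs p) \<in> borel_measurable M"
  unfolding rat_lincomb_def
  by (rule measurable_compose_countable[where f="\<lambda>qs p. \<Sum>i<length qs. real_of_rat (qs ! i) * hs i p"])
    (use assms in measurable)

lemma AE_LIMSEQ_of_summable_square_error:
  fixes H :: "nat \<Rightarrow> 'a \<Rightarrow> real"
  assumes [measurable]: "\<And>m. H m \<in> borel_measurable M" "F \<in> borel_measurable M"
    and b: "summable b" "\<And>m. 0 \<le> b m"
    and bound: "\<And>m. (\<integral>\<^sup>+y. ennreal ((H m y - F y)\<^sup>2) \<partial>M) \<le> ennreal (b m)"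
  shows "AE y in M. (\<lambda>m. H m y) \<longlonglongrightarrow> F y"
proof -
  have "(\<integral>\<^sup>+y. (\<Sum>m. ennreal ((H m y - F y)\<^sup>2)) \<partial>M) = (\<Sum>m. \<integral>\<^sup>+y. ennreal ((H m y - F y)\<^sup>2) \<partial>M)"
    by (rule nn_integral_suminf) measurable
  also have "\<dots> \<le> (\<Sum>m. ennreal (b m))"
    by (intro suminf_le bound) auto
  also have "\<dots> = ennreal (\<Sum>m. b m)"
    using b by (intro suminf_ennreal2) auto
  also have "\<dots> < \<infinity>"
    by simp
  finally have "(\<integral>\<^sup>+y. (\<Sum>m. ennreal ((H m y - F y)\<^sup>2)) \<partial>M) \<noteq> \<infinity>"
    by simp
  then have "AE y in M. (\<Sum>m. ennreal ((H m y - F y)\<^sup>2)) \<noteq> \<infinity>"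
    by (intro nn_integral_PInf_AE) measurable
  then show ?thesis
  proof eventually_elim
    case (elim y)
    then have "summable (\<lambda>m. (H m y - F y)\<^sup>2)"
      by (intro summable_suminf_not_top) auto
    then have "(\<lambda>m. (H m y - F y)\<^sup>2) \<longlonglongrightarrow> 0"
      by (rule summable_LIMSEQ_zero)
    then have "(\<lambda>m. sqrt ((H m y - F y)\<^sup>2)) \<longlonglongrightarrow> sqrt 0"
      by (rule tendsto_real_sqrt)
    then have "(\<lambda>m. \<bar>H m y - F y\<bar>) \<longlonglongrightarrow> 0"
      by simp
    then show ?case
      by (simp add: LIM_zero_cancel tendsto_rabs_zero_iff)
  qed
qed

lemma bounded_linear_L2_rat_lincomb_LIMSEQ:
  assumes A: "bounded_linear_L2 M N A" and fs: "\<And>i. L2 M (fs i)" and g: "L2 M g"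
    and hs[measurable]: "\<And>i. hs i \<in> borel_measurable N"
    and hs_eq: "\<And>i. AE y in N. hs i y = A (fs i) y"
    and approx: "\<And>m. (\<integral>\<^sup>+x. ennreal ((g x - rat_lincomb (qs m) fs x)\<^sup>2) \<partial>M) < ennreal ((1/2)^m)"
  shows "AE y in N. (\<lambda>m. rat_lincomb (qs m) hs y) \<longlonglongrightarrow> A g y"
proof -
  obtain C where C: "\<forall>f. L2 M f \<longrightarrow> L2norm N (A f) \<le> C * L2norm M f"
    using bounded_linear_L2_bounded[OF A] by blast
  have [measurable]: "A g \<in> borel_measurable N"
    using bounded_linear_L2_L2[OF A g] by (simp add: L2_def)
  have "(\<integral>\<^sup>+y. ennreal ((rat_lincomb (qs m) hs y - A g y)\<^sup>2) \<partial>N) \<le> ennreal (C\<^sup>2 * (1/2)^m)" for m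
  proof -
    define c where "c i = real_of_rat (qs m ! i)" for i
    define n where "n = length (qs m)"
    define e where "e = (\<lambda>x. g x - (\<Sum>i<n. c i * fs i x))"
    have e: "L2 M e"
      unfolding e_def by (rule L2_diff_sum[OF fs g])
    have "AE y in N. \<forall>i. hs i y = A (fs i) y"
      using hs_eq by (simp add: AE_all_countable)
    then have "AE y in N. ennreal ((rat_lincomb (qs m) hs y - A g y)\<^sup>2) = ennreal ((A e y)\<^sup>2)"
      using bounded_linear_L2_diff_sum[where fs=fs and n=n and c=c, OF A fs g]
      by eventually_elim (simp add: e_def rat_lincomb_def c_def n_def power2_commute)
    then have "(\<integral>\<^sup>+y. ennreal ((rat_lincomb (qs m) hs y - A g y)\<^sup>2) \<partial>N) = (\<integral>\<^sup>+y. ennreal ((A e y)\<^sup>2) \<partial>N)"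
      by (rule nn_integral_cong_AE)
    also have "\<dots> \<le> ennreal (C\<^sup>2) * (\<integral>\<^sup>+x. ennreal ((e x)\<^sup>2) \<partial>M)"
      by (rule bounded_linear_L2_nn_integral_square_le[OF A e C])
    also have "\<dots> \<le> ennreal (C\<^sup>2) * ennreal ((1/2)^m)"
      using approx[of m] unfolding e_def rat_lincomb_def c_def n_def
      by (intro mult_left_mono) auto
    finally show ?thesis
      by (simp add: ennreal_mult)
  qed
  moreover have "rat_lincomb (qs m) hs \<in> borel_measurable N" for m
    unfolding rat_lincomb_def by measurable
  moreover have "summable (\<lambda>m. C\<^sup>2 * (1/2::real)^m)"
    by (intro summable_mult summable_geometric) simp
  ultimately show ?thesis
    by (intro AE_LIMSEQ_of_summable_square_error[where b="\<lambda>m. C\<^sup>2 * (1/2)^m"]) auto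
qed

lemma realizable_choice:
  assumes "\<And>n. realizable \<Omega> Y \<nu> (\<xi> n)"
  shows "\<exists>h. \<forall>n. h n \<in> borel_measurable (Y \<Otimes>\<^sub>M \<Omega>) \<and>
           (\<forall>\<omega>\<in>space \<Omega>. AE y in \<nu> \<omega>. h n (y, \<omega>) = \<xi> n \<omega> y)"
  using assms unfolding realizable_def by (intro choice) blast

lemma realizable_LIMSEQ:
  assumes [measurable]: "\<And>m. H m \<in> borel_measurable (Y \<Otimes>\<^sub>M \<Omega>)"
    and lim: "\<And>\<omega>. \<omega> \<in> space \<Omega> \<Longrightarrow> AE y in \<nu> \<omega>. (\<lambda>m. H m (y, \<omega>)) \<longlonglongrightarrow> \<xi> \<omega> y"
  shows "realizable \<Omega> Y \<nu> \<xi>"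
  unfolding realizable_def
proof (intro bexI ballI)
  show "(\<lambda>p. lim (\<lambda>m. H m p)) \<in> borel_measurable (Y \<Otimes>\<^sub>M \<Omega>)"
    by measurable
  fix \<omega> assume "\<omega> \<in> space \<Omega>"
  from lim[OF this] show "AE y in \<nu> \<omega>. lim (\<lambda>m. H m (y, \<omega>)) = \<xi> \<omega> y"
    by eventually_elim (rule limI)
qed

theorem lemma9:
  fixes X :: "'x measure" and Y :: "'y measure" and \<Omega> :: "'w measure"
    and \<mu> :: "'w \<Rightarrow> 'x measure" and \<nu> :: "'w \<Rightarrow> 'y measure"
    and A :: "'w \<Rightarrow> ('x \<Rightarrow> real) \<Rightarrow> ('y \<Rightarrow> real)"
    and f :: "nat \<Rightarrow> 'x \<Rightarrow> real" and k :: "nat \<Rightarrow> 'y \<Rightarrow> real"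
  assumes "regular_family \<Omega> X \<mu>" and "regular_family \<Omega> Y \<nu>"
    and "\<forall>\<omega>\<in>space \<Omega>. bounded_linear_L2 (\<mu> \<omega>) (\<nu> \<omega>) (A \<omega>)"
    and "\<forall>n. f n \<in> borel_measurable X" and "\<forall>n. k n \<in> borel_measurable Y"
    and "\<forall>\<omega>\<in>space \<Omega>. total_L2 (\<mu> \<omega>) f \<and> total_L2 (\<nu> \<omega>) k"
    and "\<forall>n. realizable \<Omega> Y \<nu> (\<lambda>\<omega>. A \<omega> (f n))"
  shows "\<forall>g \<in> borel_measurable (X \<Otimes>\<^sub>M \<Omega>).
           (\<forall>\<omega>\<in>space \<Omega>. L2 (\<mu> \<omega>) (\<lambda>x. g (x, \<omega>))) \<longrightarrow>
           realizable \<Omega> Y \<nu> (\<lambda>\<omega>. A \<omega> (\<lambda>x. g (x, \<omega>)))"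
proof (intro ballI impI)
  fix g :: "'x \<times> 'w \<Rightarrow> real"
  assume g: "g \<in> borel_measurable (X \<Otimes>\<^sub>M \<Omega>)" and "\<forall>\<omega>\<in>space \<Omega>. L2 (\<mu> \<omega>) (\<lambda>x. g (x, \<omega>))"
  then have g_L2: "\<And>\<omega>. \<omega> \<in> space \<Omega> \<Longrightarrow> L2 (\<mu> \<omega>) (\<lambda>x. g (x, \<omega>))"
    by blast
  have f: "\<And>n. f n \<in> borel_measurable X" and tot: "\<And>\<omega>. \<omega> \<in> space \<Omega> \<Longrightarrow> total_L2 (\<mu> \<omega>) f"
    using assms(4,6) by auto
  obtain hh where hh: "\<And>n. hh n \<in> borel_measurable (Y \<Otimes>\<^sub>M \<Omega>)"
    and hh_eq: "\<And>n \<omega>. \<omega> \<in> space \<Omega> \<Longrightarrow> AE y in \<nu> \<omega>. hh n (y, \<omega>) = A \<omega> (f n) y"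
    using realizable_choice[of \<Omega> Y \<nu> "\<lambda>n \<omega>. A \<omega> (f n)"] assms(7) by blast
  obtain sel where sel: "\<And>m. sel m \<in> measurable \<Omega> (count_space UNIV)"
    and sel_approx: "\<And>m \<omega>. \<omega> \<in> space \<Omega> \<Longrightarrow>
      (\<integral>\<^sup>+x. ennreal ((g (x, \<omega>) - rat_lincomb (sel m \<omega>) f x)\<^sup>2) \<partial>\<mu> \<omega>) < ennreal ((1/2)^m)"
    using regular_family_rat_lincomb_select_seq[OF assms(1) f tot g g_L2, of "\<lambda>m. (1/2)^m"] by auto
  show "realizable \<Omega> Y \<nu> (\<lambda>\<omega>. A \<omega> (\<lambda>x. g (x, \<omega>)))"
  proof (rule realizable_LIMSEQ[where H="\<lambda>m p. rat_lincomb (sel m (snd p)) hh p"])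
    show "(\<lambda>p. rat_lincomb (sel m (snd p)) hh p) \<in> borel_measurable (Y \<Otimes>\<^sub>M \<Omega>)" for m
      by (intro measurable_rat_lincomb_select[OF hh] measurable_compose[OF measurable_snd sel])
    fix \<omega> assume \<omega>: "\<omega> \<in> space \<Omega>"
    have A: "bounded_linear_L2 (\<mu> \<omega>) (\<nu> \<omega>) (A \<omega>)" and f_L2: "\<And>n. L2 (\<mu> \<omega>) (f n)"
      using assms(3) tot[OF \<omega>] \<omega> by (auto simp: total_L2_def)
    have hh_\<omega>: "(\<lambda>y. hh n (y, \<omega>)) \<in> borel_measurable (\<nu> \<omega>)" for n
      unfolding regular_family_measurable_cong[OF assms(2) \<omega>] using \<omega> hh by measurable
    have "AE y in \<nu> \<omega>. (\<lambda>m. rat_lincomb (sel m \<omega>) (\<lambda>n y. hh n (y, \<omega>)) y) \<longlonglongrightarrow> A \<omega> (\<lambda>x. g (x, \<omega>)) y"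
      by (rule bounded_linear_L2_rat_lincomb_LIMSEQ[where fs=f and hs="\<lambda>n y. hh n (y, \<omega>)",
            OF A f_L2 g_L2[OF \<omega>] hh_\<omega> hh_eq[OF \<omega>] sel_approx[OF \<omega>]])
    then show "AE y in \<nu> \<omega>. (\<lambda>m. rat_lincomb (sel m (snd (y, \<omega>))) hh (y, \<omega>)) \<longlonglongrightarrow> A \<omega> (\<lambda>x. g (x, \<omega>)) y"
      by (simp add: rat_lincomb_def)
  qed
qed

end
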